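(* For integers $n,m$, the inequality \[ \sin(\pi/m)\,\cosh\!\left(\operatorname{arccosh}\!\left(\frac{\cos(\pi/m)}{\sin(\pi/n)}\right)+\operatorname{arccosh}\bigl(\cot(\pi/m)\cot(\pi/n)\bigr)\right) > \cosh(\log n) \] holds whenever $n\ge 5, m\ge 6$; or $n\ge 7, m\ge 4$. *)

theory Defs
  imports Complex_Main
begin

end

theory Submission
  imports Defs "HOL-Analysis.Complex_Transcendental"
begin

text \<open>
  Put \<open>a = \<pi>/m\<close>, \<open>b = \<pi>/n\<close>, \<open>A = cos a / sin b\<close> and \<open>B = cot a cot b\<close>.
  Then \<open>(A\<^sup>2 - 1)(B\<^sup>2 - 1)\<close> is a perfect square, and the addition formula
  for \<open>cosh\<close> collapses the left-hand side to \<open>cos\<^sup>2 a / (1 - cos b) - 1\<close>.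
  As \<open>1 - cos b \<le> b\<^sup>2/2\<close>, this is at least \<open>2 n\<^sup>2 cos\<^sup>2 a / \<pi>\<^sup>2 - 1\<close>, while
  \<open>cosh (log n) + 1 = (n + 1)\<^sup>2 / (2n)\<close>. What remains is
  \<open>\<pi>\<^sup>2 (n + 1)\<^sup>2 < 4 n\<^sup>3 cos\<^sup>2 a\<close>; since \<open>(n + 1)\<^sup>2 / n\<^sup>3\<close> decreases, it suffices to
  check it at \<open>n = 7\<close> with \<open>cos\<^sup>2 a \<ge> cos\<^sup>2 (\<pi>/4) = 1/2\<close> and at \<open>n = 5\<close> with
  \<open>cos\<^sup>2 a \<ge> cos\<^sup>2 (\<pi>/6) = 3/4\<close>, using \<open>\<pi>\<^sup>2 < 10\<close>.
\<close>

lemma one_minus_cos_le: "1 - cos x \<le> (x::real)\<^sup>2 / 2"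
proof -
  have "sin (x/2) ^ 2 \<le> (x/2)\<^sup>2"
    using abs_sin_x_le_abs_x[of "x/2"] by (metis abs_le_square_iff)
  then show ?thesis
    using cos_double_sin[of "x/2"] by (simp add: power_divide)
qed

lemma cosh_arcosh_add:
  fixes A B :: real
  assumes "1 \<le> A" "1 \<le> B"
  shows "cosh (arcosh A + arcosh B) = A * B + sqrt ((A\<^sup>2 - 1) * (B\<^sup>2 - 1))"
  using assms by (simp add: cosh_add sinh_arcosh_real real_sqrt_mult)

lemma sin_mult_cosh_arcosh_add_cot:
  fixes a b :: real
  assumes "0 < a" "0 < b" "a + b < pi / 2"
  shows "sin a * cosh (arcosh (cos a / sin b) + arcosh (cot a * cot b))
           = (cos a)\<^sup>2 / (1 - cos b) - 1"
proof -
  define s c u w where "s = sin a" "c = cos a" "u = sin b" "w = cos b"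
  have s: "0 < s" and u: "0 < u" and w: "0 < w" "w < 1"
    using assms
    by (auto simp: s_c_u_w_def intro!: sin_gt_zero cos_gt_zero cos_monotone_0_pi[of 0 b, simplified])
  have cu: "u < c"
    using assms by (simp add: s_c_u_w_def sin_cos_eq cos_mono_less_eq)
  have cos_add_pos: "0 < c * w - s * u"
    using assms by (simp add: s_c_u_w_def flip: cos_add) (intro cos_gt_zero; simp)
  have pyth: "s\<^sup>2 = 1 - c\<^sup>2" "u\<^sup>2 = 1 - w\<^sup>2"
    by (simp_all add: s_c_u_w_def sin_squared_eq)
  define A B where "A = c / u" "B = (c / s) * (w / u)"
  have A: "1 \<le> A" and B: "1 \<le> B"
    using cu u s cos_add_pos by (simp_all add: A_B_def field_simps)
  have "(A\<^sup>2 - 1) * (B\<^sup>2 - 1) = ((c\<^sup>2 - u\<^sup>2) / (s * u\<^sup>2))\<^sup>2"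
    using s u pyth by (simp add: A_B_def field_simps power2_eq_square) algebra
  then have "sqrt ((A\<^sup>2 - 1) * (B\<^sup>2 - 1)) = (c\<^sup>2 - u\<^sup>2) / (s * u\<^sup>2)"
    using cu u s by (simp add: power_strict_mono less_imp_le)
  then have "sin a * cosh (arcosh (cos a / sin b) + arcosh (cot a * cot b))
               = s * (A * B + (c\<^sup>2 - u\<^sup>2) / (s * u\<^sup>2))"
    using A B by (simp add: cosh_arcosh_add cot_def s_c_u_w_def A_B_def)
  also have "\<dots> = (c\<^sup>2 * (1 + w) - u\<^sup>2) / u\<^sup>2"
    using s u by (simp add: A_B_def field_simps power2_eq_square)
  also have "\<dots> = c\<^sup>2 / (1 - w) - 1"
  proof -
    have u2: "u\<^sup>2 = (1 - w) * (1 + w)"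
      using pyth(2) by (simp add: algebra_simps power2_eq_square)
    have "w * w < 1"
      using w mult_strict_mono[of w 1 w 1] by simp
    then show ?thesis
      unfolding u2 using w by (simp add: field_simps)
  qed
  finally show ?thesis
    by (simp add: s_c_u_w_def)
qed

lemma sin_mult_cosh_arcosh_add_cot_ge:
  fixes a b :: real
  assumes "0 < a" "0 < b" "a + b < pi / 2"
  shows "2 * (cos a)\<^sup>2 / b\<^sup>2 - 1
           \<le> sin a * cosh (arcosh (cos a / sin b) + arcosh (cot a * cot b))"
proof -
  have "0 < 1 - cos b"
    using assms by (auto intro!: cos_monotone_0_pi[of 0 b, simplified])
  then have "(cos a)\<^sup>2 / (b\<^sup>2 / 2) \<le> (cos a)\<^sup>2 / (1 - cos b)"
    using one_minus_cos_le[of b] assms(2) by (intro divide_left_mono) auto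
  then show ?thesis
    by (simp add: sin_mult_cosh_arcosh_add_cot[OF assms] mult.commute)
qed

lemma sq_succ_mult_cube_le:
  fixes x x0 :: real
  assumes "0 < x0" "x0 \<le> x"
  shows "(x + 1)\<^sup>2 * x0^3 \<le> (x0 + 1)\<^sup>2 * x^3"
proof -
  have "(x + 1) * x0 \<le> (x0 + 1) * x"
    using assms by (simp add: algebra_simps)
  then have "((x + 1) * x0)\<^sup>2 * x0 \<le> ((x0 + 1) * x)\<^sup>2 * x"
    using assms by (auto intro!: mult_mono[OF power_mono])
  then show ?thesis
    by (simp add: power_mult_distrib power2_eq_square power3_eq_cube mult_ac)
qed

lemma cosh_ln_less:
  fixes x x0 c k :: real
  assumes "0 < c" "0 < x0" "x0 \<le> x" "c * (x0 + 1)\<^sup>2 < 2 * k * x0 ^ 3"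
  shows "cosh (ln x) < k * x\<^sup>2 / c - 1"
proof -
  have "c * (x + 1)\<^sup>2 * x0 ^ 3 \<le> c * (x0 + 1)\<^sup>2 * x ^ 3"
    using sq_succ_mult_cube_le[OF assms(2,3)] assms(1) by (simp add: mult.assoc)
  also have "\<dots> < 2 * k * x0 ^ 3 * x ^ 3"
    using assms by (intro mult_strict_right_mono) auto
  finally have "c * (x + 1)\<^sup>2 < 2 * k * x ^ 3"
    using assms(2) by (simp add: mult.commute mult.left_commute)
  then have "(x + 1)\<^sup>2 / (2 * x) < k * x\<^sup>2 / c"
    using assms by (simp add: field_simps power3_eq_cube power2_eq_square)
  moreover have "cosh (ln x) = (x + 1)\<^sup>2 / (2 * x) - 1"
    using assms(2,3) by (simp add: cosh_ln_real field_simps power2_eq_square)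
  ultimately show ?thesis
    by simp
qed

lemma cos_sq_pi_divide_mono:
  fixes j m :: real
  assumes "2 \<le> j" "j \<le> m"
  shows "(cos (pi / j))\<^sup>2 \<le> (cos (pi / m))\<^sup>2"
proof (rule power_mono)
  show "cos (pi / j) \<le> cos (pi / m)"
  proof (rule cos_monotone_0_pi_le)
    show "pi / m \<le> pi / j"
      using assms by (intro divide_left_mono) auto
  qed (use assms in \<open>auto simp: divide_le_eq\<close>)
  have "0 \<le> pi / j" "pi / j \<le> pi / 2"
    using assms by (auto simp: divide_le_eq)
  then show "0 \<le> cos (pi / j)"
    by (intro cos_ge_zero) auto
qed

lemma pi_sq_less_10: "pi\<^sup>2 < 10"
proof -
  have "pi\<^sup>2 \<le> 3.15\<^sup>2"
    using pi_approx(2) by (intro power_mono) auto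
  also have "\<dots> < 10"
    by (simp add: power2_eq_square)
  finally show ?thesis .
qed

theorem proposition2:
  fixes n m :: int
  assumes "(n \<ge> 5 \<and> m \<ge> 6) \<or> (n \<ge> 7 \<and> m \<ge> 4)"
  shows "sin (pi / real_of_int m) *
           cosh (arcosh (cos (pi / real_of_int m) / sin (pi / real_of_int n))
                 + arcosh (cot (pi / real_of_int m) * cot (pi / real_of_int n)))
         > cosh (ln (real_of_int n))"
proof -
  define x a b where "x = real_of_int n" "a = pi / real_of_int m" "b = pi / x"
  have x: "5 \<le> x" and m: "4 \<le> real_of_int m"
    using assms by (auto simp: x_a_b_def)
  have "0 < a" "a \<le> pi / 4" "0 < b" "b \<le> pi / 5"
    using x m by (simp_all add: x_a_b_def field_simps)
  then have ab: "0 < a" "0 < b" "a + b < pi / 2"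
    using pi_gt_zero by linarith+
  obtain x0 k where x0: "0 < x0" "x0 \<le> x" "pi\<^sup>2 * (x0 + 1)\<^sup>2 < 2 * k * x0 ^ 3"
    and k: "k \<le> 2 * (cos a)\<^sup>2"
  proof (cases "n \<ge> 7")
    case True
    have "1 \<le> 2 * (cos a)\<^sup>2"
      using cos_sq_pi_divide_mono[OF _ m] by (simp add: x_a_b_def cos_45 power_divide)
    with True show ?thesis
      using pi_sq_less_10 by (intro that[of 7 1]) (auto simp: x_a_b_def)
  next
    case False
    with assms have "6 \<le> real_of_int m"
      by auto
    then have "3 / 2 \<le> 2 * (cos a)\<^sup>2"
      using cos_sq_pi_divide_mono[of 6 "real_of_int m"] by (simp add: x_a_b_def cos_30 power_divide)
    with x show ?thesis
      using pi_sq_less_10 by (intro that[of 5 "3 / 2"]) auto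
  qed
  have "cosh (ln x) < k * x\<^sup>2 / pi\<^sup>2 - 1"
    using x0 by (intro cosh_ln_less) auto
  also have "\<dots> \<le> 2 * (cos a)\<^sup>2 / b\<^sup>2 - 1"
    using k x by (simp add: x_a_b_def field_simps)
  also have "\<dots> \<le> sin a * cosh (arcosh (cos a / sin b) + arcosh (cot a * cot b))"
    using sin_mult_cosh_arcosh_add_cot_ge[OF ab] .
  finally show ?thesis
    by (simp add: x_a_b_def)
qed

end
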